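(* Let $r\ge 1$ and let $M$ be a multigraph with $n$ nodes and at most $n-\frac{n}{r}$ edges. Then $M$ has a connected component with $k$ nodes and exactly $k-1$ edges for some $k$ with $1\le k\le r$. *)

theory Defs
  imports Complex_Main "HOL-Library.Multiset"
begin

text \<open>A finite multigraph: a finite node set V and a finite multiset E of edges,
  each edge given by its two endpoints (an edge (u,w) is undirected; loops allowed).\<close>
definition multigraph :: "'v set \<Rightarrow> ('v \<times> 'v) multiset \<Rightarrow> bool" where
  "multigraph V E \<longleftrightarrow> finite V \<and> (\<forall>e\<in>#E. fst e \<in> V \<and> snd e \<in> V)"

definition adj :: "('v \<times> 'v) multiset \<Rightarrow> 'v \<Rightarrow> 'v \<Rightarrow> bool" where
  "adj E u w \<longleftrightarrow> (u, w) \<in># E \<or> (w, u) \<in># E"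

definition reachable :: "('v \<times> 'v) multiset \<Rightarrow> 'v \<Rightarrow> 'v \<Rightarrow> bool" where
  "reachable E u w \<longleftrightarrow> (u, w) \<in> {(a, b). adj E a b}\<^sup>*"

definition is_component :: "'v set \<Rightarrow> ('v \<times> 'v) multiset \<Rightarrow> 'v set \<Rightarrow> bool" where
  "is_component V E C \<longleftrightarrow> (\<exists>v\<in>V. C = {w. reachable E v w})"

definition comp_edges :: "('v \<times> 'v) multiset \<Rightarrow> 'v set \<Rightarrow> ('v \<times> 'v) multiset" where
  "comp_edges E C = filter_mset (\<lambda>e. fst e \<in> C \<and> snd e \<in> C) E"

end

theory Submission
  imports Defs
begin

text \<open>Every component with \<open>k\<close> nodes has at least \<open>k - 1\<close> edges: in a breadth-first
  search from any node, each other node is entered through an edge from a node one step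
  closer to the root, and distinct nodes use distinct edges. Suppose no component with at
  most \<open>r\<close> nodes is a tree. Then a component with \<open>k \<le> r\<close> nodes has at least \<open>k\<close> edges,
  and one with \<open>k > r\<close> nodes has at least \<open>k - 1 > k - k/r\<close> edges; so every component
  has more than \<open>k - k/r\<close> edges, and summing over the components gives more than
  \<open>n - n/r\<close> edges in total.\<close>

lemma reachable_refl: "reachable E v v"
  by (simp add: reachable_def)

lemma reachable_trans: "reachable E u w \<Longrightarrow> reachable E w x \<Longrightarrow> reachable E u x"
  unfolding reachable_def by (rule rtrancl_trans)

lemma reachable_sym: "reachable E u w \<Longrightarrow> reachable E w u"
proof -
  have "sym {(a, b). adj E a b}"
    by (auto intro: symI simp: adj_def)
  then show "reachable E u w \<Longrightarrow> reachable E w u"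
    unfolding reachable_def by (auto dest: sym_rtrancl symD)
qed

lemma reachable_if_adj: "adj E u w \<Longrightarrow> reachable E u w"
  by (simp add: reachable_def r_into_rtrancl)

lemma reachable_in_nodes:
  assumes "multigraph V E" "v \<in> V" "reachable E v w"
  shows "w \<in> V"
proof -
  have "(v, w) \<in> {(a, b). adj E a b}\<^sup>*"
    using assms(3) by (simp add: reachable_def)
  then show ?thesis
  proof (induction rule: rtrancl_induct)
    case base
    show ?case using assms(2) .
  next
    case (step y z)
    then have "(y, z) \<in># E \<or> (z, y) \<in># E"
      by (simp add: adj_def)
    then show ?case
      using assms(1) by (auto simp: multigraph_def)
  qed
qed

lemma reachable_class_eq:
  "reachable E v x \<Longrightarrow> {w. reachable E v w} = {w. reachable E x w}"
  by (blast intro: reachable_trans reachable_sym)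

lemma component_subset:
  assumes "multigraph V E" "is_component V E C"
  shows "C \<subseteq> V"
  using assms reachable_in_nodes by (auto simp: is_component_def)

lemma finite_component:
  assumes "multigraph V E" "is_component V E C"
  shows "finite C"
  using assms(1) by (simp add: multigraph_def finite_subset[OF component_subset[OF assms]])

lemma component_eqI:
  assumes "is_component V E C" "is_component V E C'" "x \<in> C" "x \<in> C'"
  shows "C = C'"
  using assms unfolding is_component_def by (metis mem_Collect_eq reachable_class_eq)

lemma finite_components:
  assumes "multigraph V E"
  shows "finite {C. is_component V E C}"
proof -
  have "{C. is_component V E C} = (\<lambda>v. {w. reachable E v w}) ` V"
    by (auto simp: is_component_def)
  then show ?thesis
    using assms by (simp add: multigraph_def)
qed

lemma Union_components:
  assumes "multigraph V E"
  shows "\<Union>{C. is_component V E C} = V"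
proof
  show "\<Union>{C. is_component V E C} \<subseteq> V"
    using component_subset[OF assms] by blast
  show "V \<subseteq> \<Union>{C. is_component V E C}"
    by (auto simp: is_component_def intro: reachable_refl)
qed

lemma card_eq_sum_card_components:
  assumes "multigraph V E"
  shows "card V = (\<Sum>C | is_component V E C. card C)"
proof -
  have "pairwise disjnt {C. is_component V E C}"
    by (auto simp: pairwise_def disjnt_def dest: component_eqI)
  then show ?thesis
    using card_Union_disjoint[of "{C. is_component V E C}"] finite_component[OF assms]
    by (simp add: Union_components[OF assms])
qed

lemma edge_in_unique_component:
  assumes "multigraph V E" "e \<in># E"
  shows "\<exists>!C. is_component V E C \<and> fst e \<in> C \<and> snd e \<in> C"
proof
  let ?C = "{w. reachable E (fst e) w}"
  have "fst e \<in> V"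
    using assms by (simp add: multigraph_def)
  then have C: "is_component V E ?C"
    by (auto simp: is_component_def)
  have "adj E (fst e) (snd e)"
    using assms(2) by (simp add: adj_def)
  then show "is_component V E ?C \<and> fst e \<in> ?C \<and> snd e \<in> ?C"
    using C by (simp add: reachable_refl reachable_if_adj)
  fix C' assume "is_component V E C' \<and> fst e \<in> C' \<and> snd e \<in> C'"
  then show "C' = ?C"
    using component_eqI[OF _ C, of C' "fst e"] by (simp add: reachable_refl)
qed

lemma size_eq_sum_size_filter_mset:
  assumes "finite S" "\<And>x. x \<in># M \<Longrightarrow> \<exists>!C. C \<in> S \<and> P C x"
  shows "size M = (\<Sum>C\<in>S. size (filter_mset (P C) M))"
  using assms(2)
proof (induction M)
  case empty
  then show ?case by simp
next
  case (add x M)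
  then obtain C0 where C0: "C0 \<in> S" "\<And>C. C \<in> S \<Longrightarrow> P C x \<longleftrightarrow> C = C0"
    by (metis union_single_eq_member)
  have "(\<Sum>C\<in>S. size (filter_mset (P C) (add_mset x M)))
      = (\<Sum>C\<in>S. size (filter_mset (P C) M) + (if C = C0 then 1 else 0))"
    using C0(2) by (intro sum.cong) auto
  also have "\<dots> = (\<Sum>C\<in>S. size (filter_mset (P C) M)) + 1"
    using assms(1) C0(1) by (simp add: sum.distrib)
  finally show ?case
    using add by simp
qed

lemma size_eq_sum_comp_edges:
  assumes "multigraph V E"
  shows "size E = (\<Sum>C | is_component V E C. size (comp_edges E C))"
  unfolding comp_edges_def
  by (rule size_eq_sum_size_filter_mset)
    (use finite_components[OF assms] edge_in_unique_component[OF assms] in auto)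

definition hop_dist :: "('v \<times> 'v) multiset \<Rightarrow> 'v \<Rightarrow> 'v \<Rightarrow> nat" where
  "hop_dist E v w = (LEAST n. (v, w) \<in> {(a, b). adj E a b} ^^ n)"

lemma reachable_iff_relpow:
  "reachable E v w \<longleftrightarrow> (\<exists>n. (v, w) \<in> {(a, b). adj E a b} ^^ n)"
  by (simp add: reachable_def rtrancl_power)

lemma parent_in_bfs_tree:
  assumes "reachable E v w" "w \<noteq> v"
  obtains u where "adj E u w" "reachable E v u" "hop_dist E v w = Suc (hop_dist E v u)"
proof -
  let ?R = "{(a, b). adj E a b}"
  obtain n where "(v, w) \<in> ?R ^^ n"
    using assms(1) by (auto simp: reachable_iff_relpow)
  then have dw: "(v, w) \<in> ?R ^^ hop_dist E v w"
    unfolding hop_dist_def by (rule LeastI)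
  with assms(2) obtain m where m: "hop_dist E v w = Suc m"
    by (cases "hop_dist E v w") auto
  obtain u where vu: "(v, u) \<in> ?R ^^ m" and uw: "adj E u w"
    using dw m by (auto elim: relpow_Suc_E)
  have "hop_dist E v u \<le> m"
    unfolding hop_dist_def using vu by (rule Least_le)
  moreover have "(v, u) \<in> ?R ^^ hop_dist E v u"
    unfolding hop_dist_def using vu by (rule LeastI)
  with uw have "(v, w) \<in> ?R ^^ Suc (hop_dist E v u)"
    by auto
  then have "hop_dist E v w \<le> Suc (hop_dist E v u)"
    unfolding hop_dist_def by (rule Least_le)
  ultimately have "hop_dist E v w = Suc (hop_dist E v u)"
    using m by simp
  moreover have "reachable E v u"
    using vu by (auto simp: reachable_iff_relpow)
  ultimately show thesis
    using that uw by blast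
qed

lemma card_set_mset_le_size: "card (set_mset M) \<le> size M"
  by (induction M) (auto simp: card_insert_if)

lemma card_component_le_Suc_size_comp_edges:
  assumes "is_component V E C"
  shows "card C \<le> Suc (size (comp_edges E C))"
proof -
  from assms obtain v where C: "C = {w. reachable E v w}"
    by (auto simp: is_component_def)
  have "\<exists>u e. e \<in># comp_edges E C \<and> e \<in> {(u, w), (w, u)}
      \<and> hop_dist E v w = Suc (hop_dist E v u)" if w: "w \<in> C - {v}" for w
  proof -
    from w C have "reachable E v w" "w \<noteq> v"
      by auto
    then obtain u where u: "adj E u w" "reachable E v u"
        "hop_dist E v w = Suc (hop_dist E v u)"
      by (rule parent_in_bfs_tree)
    have "u \<in> C" "w \<in> C"
      using u(2) w C by auto
    from u(1) consider "(u, w) \<in># E" | "(w, u) \<in># E"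
      unfolding adj_def by blast
    then show ?thesis
    proof cases
      case 1
      then show ?thesis
        using \<open>u \<in> C\<close> \<open>w \<in> C\<close> u(3)
        by (intro exI[of _ u] exI[of _ "(u, w)"]) (simp add: comp_edges_def)
    next
      case 2
      then show ?thesis
        using \<open>u \<in> C\<close> \<open>w \<in> C\<close> u(3)
        by (intro exI[of _ u] exI[of _ "(w, u)"]) (simp add: comp_edges_def)
    qed
  qed
  then obtain parent parent_edge where parent_edge: "\<And>w. w \<in> C - {v} \<Longrightarrow>
      parent_edge w \<in># comp_edges E C \<and> parent_edge w \<in> {(parent w, w), (w, parent w)}
      \<and> hop_dist E v w = Suc (hop_dist E v (parent w))"
    by metis
  \<comment> \<open>Of the two endpoints of a parent edge, the child is the one farther from \<open>v\<close>.\<close>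
  have "inj_on parent_edge (C - {v})"
  proof (rule inj_onI)
    fix w w' assume w: "w \<in> C - {v}" and w': "w' \<in> C - {v}"
      and eq: "parent_edge w = parent_edge w'"
    show "w = w'"
      using parent_edge[OF w] parent_edge[OF w'] eq by auto
  qed
  moreover have "parent_edge ` (C - {v}) \<subseteq> set_mset (comp_edges E C)"
    using parent_edge by blast
  ultimately have "card (C - {v}) \<le> card (set_mset (comp_edges E C))"
    by (simp add: card_inj_on_le)
  also have "\<dots> \<le> size (comp_edges E C)"
    by (rule card_set_mset_le_size)
  finally show ?thesis
    using C by (simp add: card_Diff_singleton reachable_refl)
qed

lemma card_component_pos:
  assumes "multigraph V E" "is_component V E C"
  shows "card C > 0"
  using finite_component[OF assms] assms(2)
  by (auto simp: card_gt_0_iff is_component_def intro: reachable_refl)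

lemma sub_div_lt_edges_unless_small_tree:
  fixes r :: real and k m :: nat
  assumes "r \<ge> 1" "1 \<le> k" "k \<le> Suc m" "real k \<le> r \<Longrightarrow> m \<noteq> k - 1"
  shows "real k - real k / r < real m"
proof (cases "real k \<le> r")
  case True
  then have "k \<le> m"
    using assms by linarith
  moreover have "real k / r > 0"
    using assms(1,2) by simp
  ultimately show ?thesis
    by linarith
next
  case False
  then have "real k / r > 1"
    using assms(1) by simp
  then show ?thesis
    using assms(3) by linarith
qed

theorem lemma10:
  fixes V :: "'v set" and E :: "('v \<times> 'v) multiset" and r :: real
  assumes "multigraph V E"
    and "V \<noteq> {}"
    and "r \<ge> 1"
    and "real (size E) \<le> real (card V) - real (card V) / r"
  shows "\<exists>C k. is_component V E C \<and> card C = k \<and> size (comp_edges E C) = k - 1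
               \<and> 1 \<le> k \<and> real k \<le> r"
proof (rule ccontr)
  assume no_small_tree: "\<not> ?thesis"
  let ?S = "{C. is_component V E C}"
  have "real (card C) - real (card C) / r < real (size (comp_edges E C))" if "C \<in> ?S" for C
    using that no_small_tree assms(3) card_component_pos[OF assms(1), of C]
    by (intro sub_div_lt_edges_unless_small_tree card_component_le_Suc_size_comp_edges) auto
  then have "(\<Sum>C\<in>?S. real (card C) - real (card C) / r) < (\<Sum>C\<in>?S. real (size (comp_edges E C)))"
    using finite_components[OF assms(1)] Union_components[OF assms(1)] assms(2)
    by (intro sum_strict_mono) auto
  then have "real (card V) - real (card V) / r < real (size E)"
    by (simp add: card_eq_sum_card_components[OF assms(1)] size_eq_sum_comp_edges[OF assms(1)]
        sum_subtractf sum_divide_distrib)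
  with assms(4) show False
    by simp
qed

end
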